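(* Let $\mathcal{G}$ be a simple temporal clique and $G^-=(V,E^-)$ its minimum-edge digraph. For every directed path $(u_0,u_1,\dots,u_k)$ with $k\ge 1$ in $G^-$, the vertex sequence $u_0,u_1,\dots,u_k$ is a journey in $\mathcal{G}$.
   Context: A simple temporal clique is a pair $\mathcal{G}=(G,\lambda)$ where $G=(V,E)$ is the complete graph on a finite vertex set $V$ and $\lambda:E\to\mathbb{N}$ assigns to each edge a single integer label such that any two distinct edges sharing an endpoint have different labels. A journey from $x$ to $y$ is a sequence of vertices $x=u_0,\dots,u_k=y$ ($k\ge1$) with $\lambda(\{u_{i-1},u_i\})<\lambda(\{u_i,u_{i+1}\})$ for all $1\le i<k$. For a vertex $v$, $e^-(v)$ denotes the edge incident to $v$ with the smallest label. The minimum-edge digraph $G^-=(V,E^-)$ has an arc $(u,v)$ whenever $\{u,v\}=e^-(v)$, except that if two vertices $u,v$ satisfy $e^-(u)=e^-(v)=\{u,v\}$, only one of the two arcs $(u,v),(v,u)$ is included (chosen arbitrarily). *)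

theory Defs
  imports Main
begin

definition clique_edges :: "'a set \<Rightarrow> 'a set set" where
  "clique_edges V = {{u, v} | u v. u \<in> V \<and> v \<in> V \<and> u \<noteq> v}"

definition simple_temporal_clique :: "'a set \<Rightarrow> ('a set \<Rightarrow> nat) \<Rightarrow> bool" where
  "simple_temporal_clique V lam \<longleftrightarrow> finite V \<and>
     (\<forall>e1\<in>clique_edges V. \<forall>e2\<in>clique_edges V. e1 \<noteq> e2 \<and> e1 \<inter> e2 \<noteq> {} \<longrightarrow> lam e1 \<noteq> lam e2)"

definition min_edge :: "'a set \<Rightarrow> ('a set \<Rightarrow> nat) \<Rightarrow> 'a \<Rightarrow> 'a set" where
  "min_edge V lam v = (ARG_MIN lam e. e \<in> clique_edges V \<and> v \<in> e)"

text \<open>A is a minimum-edge digraph: arc (u,v) iff {u,v} = e^-(v), except that for a pair with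
  e^-(u) = e^-(v) = {u,v} exactly one of the two arcs (arbitrary) is present.\<close>
definition min_edge_digraph :: "'a set \<Rightarrow> ('a set \<Rightarrow> nat) \<Rightarrow> ('a \<times> 'a) set \<Rightarrow> bool" where
  "min_edge_digraph V lam A \<longleftrightarrow>
     A \<subseteq> {(u, v). u \<in> V \<and> v \<in> V \<and> u \<noteq> v \<and> {u, v} = min_edge V lam v} \<and>
     (\<forall>u\<in>V. \<forall>v\<in>V. u \<noteq> v \<and> {u, v} = min_edge V lam v \<longrightarrow> (u, v) \<in> A \<or> (v, u) \<in> A) \<and>
     (\<forall>u v. (u, v) \<in> A \<longrightarrow> (v, u) \<notin> A)"

definition directed_path :: "('a \<times> 'a) set \<Rightarrow> 'a list \<Rightarrow> bool" where
  "directed_path A xs \<longleftrightarrow> length xs \<ge> 2 \<and> distinct xs \<and>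
     (\<forall>i. i + 1 < length xs \<longrightarrow> (xs ! i, xs ! (i + 1)) \<in> A)"

definition journey :: "'a set \<Rightarrow> ('a set \<Rightarrow> nat) \<Rightarrow> 'a list \<Rightarrow> bool" where
  "journey V lam xs \<longleftrightarrow> length xs \<ge> 2 \<and> set xs \<subseteq> V \<and>
     (\<forall>i. i + 1 < length xs \<longrightarrow> xs ! i \<noteq> xs ! (i + 1)) \<and>
     (\<forall>i. i + 2 < length xs \<longrightarrow>
        lam {xs ! i, xs ! (i + 1)} < lam {xs ! (i + 1), xs ! (i + 2)})"

end

theory Submission
  imports Defs
begin

(* Along an arc (u, v) of the minimum-edge digraph, {u, v} carries the smallest label at v,
   so it is at most the label of the next arc (v, w).  The two edges are distinct since a
   directed path visits u and w only once, and they share v, so the labels differ and the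
   inequality is strict. *)

lemma doubleton_in_clique_edges:
  "u \<in> V \<Longrightarrow> v \<in> V \<Longrightarrow> u \<noteq> v \<Longrightarrow> {u, v} \<in> clique_edges V"
  unfolding clique_edges_def by blast

lemma min_edge_label_le:
  assumes "e \<in> clique_edges V" and "v \<in> e"
  shows "lam (min_edge V lam v) \<le> lam e"
  unfolding min_edge_def by (rule arg_min_nat_le) (use assms in auto)

lemma min_edge_label_less:
  assumes "simple_temporal_clique V lam"
    and "a \<in> V" "b \<in> V" "c \<in> V" "a \<noteq> b" "b \<noteq> c" "a \<noteq> c"
    and "{a, b} = min_edge V lam b"
  shows "lam {a, b} < lam {b, c}"
proof -
  have ab: "{a, b} \<in> clique_edges V" and bc: "{b, c} \<in> clique_edges V"
    using assms(2-6) by (auto intro: doubleton_in_clique_edges)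
  have "lam {a, b} \<le> lam {b, c}"
    using min_edge_label_le[OF bc, of b lam] assms(8) by simp
  moreover have "lam {a, b} \<noteq> lam {b, c}"
  proof -
    have "{a, b} \<noteq> {b, c}" and "{a, b} \<inter> {b, c} \<noteq> {}"
      using assms(5-7) by (auto simp: doubleton_eq_iff)
    then show ?thesis
      using assms(1) ab bc unfolding simple_temporal_clique_def by simp
  qed
  ultimately show ?thesis by simp
qed

lemma min_edge_digraph_arcD:
  assumes "min_edge_digraph V lam A" and "(u, v) \<in> A"
  shows "u \<in> V" "v \<in> V" "u \<noteq> v" "{u, v} = min_edge V lam v"
  using assms unfolding min_edge_digraph_def by auto

lemma directed_path_set_subset:
  assumes "directed_path A xs" and "A \<subseteq> V \<times> V"
  shows "set xs \<subseteq> V"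
proof
  fix x assume "x \<in> set xs"
  then obtain j where j: "j < length xs" "x = xs ! j"
    by (auto simp: in_set_conv_nth)
  have arc: "\<And>i. i + 1 < length xs \<Longrightarrow> (xs ! i, xs ! (i + 1)) \<in> V \<times> V"
    using assms unfolding directed_path_def by blast
  show "x \<in> V"
  proof (cases j)
    case 0
    then show ?thesis
      using arc[of 0] j assms(1) unfolding directed_path_def by auto
  next
    case (Suc i)
    then show ?thesis using arc[of i] j by auto
  qed
qed

theorem lemma2:
  fixes V :: "'a set" and lam :: "'a set \<Rightarrow> nat" and A :: "('a \<times> 'a) set" and xs :: "'a list"
  assumes "simple_temporal_clique V lam"
    and "min_edge_digraph V lam A"
    and "directed_path A xs"
  shows "journey V lam xs"
proof -
  have len: "length xs \<ge> 2" and dist: "distinct xs"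
    and arc: "\<And>i. i + 1 < length xs \<Longrightarrow> (xs ! i, xs ! (i + 1)) \<in> A"
    using assms(3) unfolding directed_path_def by auto
  note arcD = min_edge_digraph_arcD[OF assms(2) arc]
  have "A \<subseteq> V \<times> V"
    using min_edge_digraph_arcD(1,2)[OF assms(2)] by auto
  then have "set xs \<subseteq> V"
    by (rule directed_path_set_subset[OF assms(3)])
  moreover have "lam {xs ! i, xs ! (i + 1)} < lam {xs ! (i + 1), xs ! (i + 2)}"
    if "i + 2 < length xs" for i
  proof (rule min_edge_label_less[OF assms(1)])
    show "xs ! i \<noteq> xs ! (i + 2)"
      using dist that by (simp add: nth_eq_iff_index_eq)
  qed (use that arcD[of i] arcD[of "i + 1"] in \<open>simp_all add: add.assoc\<close>)
  ultimately show ?thesis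
    unfolding journey_def using len arcD(3) by blast
qed

end
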